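(* Let $k\ge2$ and $r\ge0$, and set $\alpha=1-2^{-k}$ and $$\beta=\sum_{j=1}^k\frac{j}{2^j}+\frac{k+1}{2^k}\;\Big(=2-\frac1{2^k}\Big).$$ Let $X$ be a strongly-stable sequence with respect to the $(k,r)$-tree $T_r$ that is a whole multiple of its atomic sequence. Then $$\hat c(GF,X,T_r)=2^k\beta(1-\alpha^r)+\alpha^r.$$ In asymptotic terms, $\hat c(GF,X,T_r)=\Theta(2^k(1-\alpha^r))$.
   Context: Binary search tree model. An algorithm $A$ serves a query sequence $X=[x_1,\dots,x_m]$ from an initial BST $T_0$. Before serving $x_t$ it holds a BST $T_{t-1}$; it searches $x_t$ from the root and may then restructure the tree by rotations into $T_t$. Let $P_t$ be the set of nodes on the root-to-$x_t$ path of $T_{t-1}$, and let $U_t$ be the node set of the minimal subtree containing all edges rotated in transforming $T_{t-1}$ into $T_t$. The cost at time $t$ is $|P_t\cup U_t|$, and $\hat c(A,X,T_0)$ is the total cost divided by $m$. Greedy Future ($GF$). After finding $x_t$ in $T_{t-1}$, let $v_1<\dots<v_k$ be the keys on the root-to-$x_t$ path, set $v_0=-\infty$ and $v_{k+1}=+\infty$, and let $R_0,\dots,R_k$ be the subtrees hanging off this path. For each $i$, $\tau(v_i)$ is the smallest $s>t$ with $x_s\in(v_{i-1},v_{i+1})$, or $+\infty$ if there is none. $GF$ rearranges $v_1,\dots,v_k$ as a treap: a BST in key order and a heap in $\tau$, with the smallest $\tau$ at the top. Ties in $\tau$ are broken in favor of the node of smaller depth in $T_{t-1}$. It then reattaches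 $R_0,\dots,R_k$ unchanged at their unique positions, giving $T_t$. $(k,r)$-trees. Let $k\ge2$ and $r\ge0$ be integers. $T_0$ is a single node. For $r\ge1$, $T_r$ has $k$ trunk nodes $w_1,\dots,w_k$: $w_1$ is the root, $w_2$ is the right child of $w_1$, and $w_{j+1}$ is the left child of $w_j$ for $2\le j\le k-1$. The left child of $w_k$ is a single leaf (the actual leaf). Each of the remaining $k$ child positions of trunk nodes (the left child of $w_1$ and the right child of $w_j$ for $2\le j\le k$) is the root of a copy of $T_{r-1}$. Keys are $1,\dots,|T_r|$ in symmetric order. Stable sequences. Let $T$ be a full binary search tree, and let $X$ be a query sequence consisting only of keys stored at leaves of $T$. For an inner node $v$, let $X_v$ be the subsequence of $X$ consisting of the queries to keys in the subtree of $v$. The node $v$ is strongly-stable if consecutive queries of $X_v$ alternate between the left and right subtrees of $v$. $X$ is strongly-stable if every inner node of $T$ is strongly-stable. The atomic sequence is the shortest such sequence all of whose repetitions are again strongly-stable for $T$. $X$ is a whole multiple of it if it is a concatenation of copies of it. *)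

theory Defs
  imports Complex_Main "HOL-Library.Tree" "HOL-Library.Extended_Nat" "HOL-Library.Product_Lexorder"
begin

fun search_path :: "nat tree \<Rightarrow> nat \<Rightarrow> nat list" where
  "search_path Leaf x = []"
| "search_path (Node l a r) x =
     (if x = a then [a] else if x < a then a # search_path l x else a # search_path r x)"

definition depth_of :: "nat tree \<Rightarrow> nat \<Rightarrow> nat" where
  "depth_of T v = length (search_path T v) - 1"

(* path keys v_1 < ... < v_k (sorted) and hanging subtrees R_0, ..., R_k in key order *)
fun path_split :: "nat tree \<Rightarrow> nat \<Rightarrow> nat list \<times> nat tree list" where
  "path_split Leaf x = ([], [Leaf])"
| "path_split (Node l a r) x =
     (if x = a then ([a], [l, r])
      else if x < a then (let (ks, ss) = path_split l x in (ks @ [a], ss @ [r]))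
      else (let (ks, ss) = path_split r x in (a # ks, l # ss)))"

(* y lies in the open interval (v_{i-1}, v_{i+1}) (0-based index i into vs),
   with v_0 = -infinity and v_{k+1} = +infinity *)
definition in_window :: "nat list \<Rightarrow> nat \<Rightarrow> nat \<Rightarrow> bool" where
  "in_window vs i y \<longleftrightarrow> (i = 0 \<or> vs ! (i - 1) < y) \<and> (length vs \<le> Suc i \<or> y < vs ! Suc i)"

(* tau of the i-th path key, measured as offset into the future queries fut = [x_{t+1},...,x_m];
   infinity if no future query falls in the window *)
definition tau :: "nat list \<Rightarrow> nat list \<Rightarrow> nat \<Rightarrow> enat" where
  "tau fut vs i =
     (if \<exists>s < length fut. in_window vs i (fut ! s)
      then enat (LEAST s. s < length fut \<and> in_window vs i (fut ! s))
      else \<infinity>)"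

(* treap construction: keys in order with priorities (tau, depth), lexicographic, smallest at top;
   ss are the subtrees to be reattached (one more than keys). First argument is fuel. *)
primrec build :: "nat \<Rightarrow> (nat \<times> (enat \<times> nat)) list \<Rightarrow> nat tree list \<Rightarrow> nat tree" where
  "build 0 vps ss = hd ss"
| "build (Suc n) vps ss =
     (if vps = [] then hd ss else
      (let i = (LEAST i. i < length vps \<and> (\<forall>j < length vps. snd (vps ! i) \<le> snd (vps ! j)))
       in Node (build n (take i vps) (take (Suc i) ss)) (fst (vps ! i))
               (build n (drop (Suc i) vps) (drop (Suc i) ss))))"

definition gf_step :: "nat tree \<Rightarrow> nat \<Rightarrow> nat list \<Rightarrow> nat tree" where
  "gf_step T x fut =
     (let (vs, ss) = path_split T x;
          vps = map (\<lambda>i. (vs ! i, (tau fut vs i, depth_of T (vs ! i)))) [0..<length vs]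
      in build (length vs) vps ss)"

(* total cost of GF; the cost at each step is |P_t u U_t| = |P_t|, since GF only
   rearranges the nodes of the search path *)
fun gf_total :: "nat tree \<Rightarrow> nat list \<Rightarrow> nat" where
  "gf_total T [] = 0"
| "gf_total T (x # xs) = card (set (search_path T x)) + gf_total (gf_step T x xs) xs"

definition cost_hat_GF :: "nat list \<Rightarrow> nat tree \<Rightarrow> real" where
  "cost_hat_GF X T0 = real (gf_total T0 X) / real (length X)"

(* (k,r)-trees: shapes, then keys 1..|T_r| in symmetric order *)
primrec chain :: "unit tree \<Rightarrow> nat \<Rightarrow> unit tree" where
  "chain S 0 = Node Leaf () Leaf"
| "chain S (Suc m) = Node (chain S m) () S"

primrec kr_shape :: "nat \<Rightarrow> nat \<Rightarrow> unit tree" where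
  "kr_shape k 0 = Node Leaf () Leaf"
| "kr_shape k (Suc r) = Node (kr_shape k r) () (chain (kr_shape k r) (k - 1))"

fun label :: "unit tree \<Rightarrow> nat \<Rightarrow> nat tree \<times> nat" where
  "label Leaf n = (Leaf, n)"
| "label (Node l u r) n =
     (let (l', n1) = label l n; (r', n2) = label r (Suc n1) in (Node l' n1 r', n2))"

definition kr_tree :: "nat \<Rightarrow> nat \<Rightarrow> nat tree" where
  "kr_tree k r = fst (label (kr_shape k r) 1)"

definition leaf_keys :: "nat tree \<Rightarrow> nat set" where
  "leaf_keys T = {a. Node Leaf a Leaf \<in> subtrees T}"

definition alternates :: "nat tree \<Rightarrow> nat tree \<Rightarrow> nat list \<Rightarrow> bool" where
  "alternates l r xs \<longleftrightarrow>
     (\<forall>i. Suc i < length xs \<longrightarrow>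
        (xs ! i \<in> set_tree l \<and> xs ! Suc i \<in> set_tree r) \<or>
        (xs ! i \<in> set_tree r \<and> xs ! Suc i \<in> set_tree l))"

definition strongly_stable :: "nat tree \<Rightarrow> nat list \<Rightarrow> bool" where
  "strongly_stable T X \<longleftrightarrow>
     set X \<subseteq> leaf_keys T \<and>
     (\<forall>l a r. Node l a r \<in> subtrees T \<and> (l \<noteq> Leaf \<or> r \<noteq> Leaf) \<longrightarrow>
        alternates l r (filter (\<lambda>x. x \<in> set_tree (Node l a r)) X))"

definition rep_stable :: "nat tree \<Rightarrow> nat list \<Rightarrow> bool" where
  "rep_stable T A \<longleftrightarrow> A \<noteq> [] \<and> (\<forall>j \<ge> 1. strongly_stable T (concat (replicate j A)))"

definition atomic_seq :: "nat tree \<Rightarrow> nat list \<Rightarrow> bool" where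
  "atomic_seq T A \<longleftrightarrow> rep_stable T A \<and> (\<forall>B. rep_stable T B \<longrightarrow> length A \<le> length B)"

definition whole_multiple_of_atomic :: "nat tree \<Rightarrow> nat list \<Rightarrow> bool" where
  "whole_multiple_of_atomic T X \<longleftrightarrow>
     (\<exists>A n. atomic_seq T A \<and> n \<ge> 1 \<and> X = concat (replicate n A))"

end

theory Submission
  imports Defs
begin

text \<open>
  On a strongly stable sequence Greedy Future never rotates. When x is searched, every key a on
  the search path has smaller priority than the path keys v below it: smaller depth, and no larger
  \<tau>, because every key of T in the window of v lies in the child of a that contains x, while strong
  stability forces the next query below a to go to the other child, which lies in the window of a.
  So the path keys already form the treap that GF builds, GF keeps the initial tree, and its cost is
  the static search cost. Strong stability of X @ X moreover splits the queries arriving at every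
  inner node evenly between its children, so the cost per query is the expected length of a fair
  random descent from the root to a leaf; on the (k,r)-trees this quantity c(r) satisfies
  c(0) = 1 and c(r + 1) = \<beta> + \<alpha> c(r).
\<close>

section \<open>Search paths and the treap builder\<close>

lemma self_in_subtrees [simp]: "t \<in> subtrees t"
  by (cases t) auto

lemma subtrees_trans: "s \<in> subtrees t \<Longrightarrow> u \<in> subtrees s \<Longrightarrow> u \<in> subtrees t"
  by (induction t) auto

lemma set_tree_subtrees: "s \<in> subtrees t \<Longrightarrow> set_tree s \<subseteq> set_tree t"
  by (induction t) auto

lemma bst_subtrees: "bst t \<Longrightarrow> s \<in> subtrees t \<Longrightarrow> bst s"
  by (induction t) auto

lemma leaf_keys_subset: "leaf_keys T \<subseteq> set_tree T"
  unfolding leaf_keys_def using in_set_tree_if by fastforce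

lemma set_search_path_subset: "set (search_path T x) \<subseteq> set_tree T"
  by (induction T) auto

lemma search_path_distinct: "bst T \<Longrightarrow> distinct (search_path T x)"
  by (induction T) (use set_search_path_subset in fastforce)+

lemma search_path_neq_Nil: "x \<in> set_tree T \<Longrightarrow> search_path T x \<noteq> []"
  by (induction T) auto

lemma set_path_split: "set (fst (path_split T x)) = set (search_path T x)"
  by (induction T x rule: path_split.induct) (auto split: prod.splits)

lemma length_path_split: "length (fst (path_split T x)) = length (search_path T x)"
  by (induction T x rule: path_split.induct) (auto split: prod.splits)

lemma length_path_split_subtrees: "length (snd (path_split T x)) = Suc (length (fst (path_split T x)))"
  by (induction T x rule: path_split.induct) (auto split: prod.splits)

lemma sorted_path_split: "bst T \<Longrightarrow> sorted_wrt (<) (fst (path_split T x))"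
proof (induction T x rule: path_split.induct)
  case (2 l a r x)
  have "set (fst (path_split l x)) \<subseteq> set_tree l" "set (fst (path_split r x)) \<subseteq> set_tree r"
    using set_path_split set_search_path_subset by blast+
  with 2 show ?case
    by (auto split: prod.splits simp: sorted_wrt_append)
qed simp

text \<open>The keys pfx above S confine S to an interval that contains no other key of T.\<close>

definition ancestor_path :: "nat tree \<Rightarrow> nat tree \<Rightarrow> nat list \<Rightarrow> bool" where
  "ancestor_path T S pfx \<longleftrightarrow>
     (\<forall>y\<in>set_tree S. search_path T y = pfx @ search_path S y) \<and>
     (\<forall>w\<in>set pfx. (\<forall>z\<in>set_tree S. z < w) \<or> (\<forall>z\<in>set_tree S. w < z)) \<and>
     (\<forall>y\<in>set_tree T - set_tree S. \<exists>w\<in>set pfx. \<exists>z\<in>set_tree S. z < w \<and> w \<le> y \<or> y \<le> w \<and> w < z)"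

lemma ancestor_path_Cons:
  assumes "ancestor_path c S pfx" and "c \<in> {l, r}" and "S \<in> subtrees c" and "S \<noteq> Leaf"
    and "bst (Node l a r)"
  shows "ancestor_path (Node l a r) S (a # pfx)"
proof -
  have pfx: "\<forall>y\<in>set_tree S. search_path c y = pfx @ search_path S y"
    "\<forall>w\<in>set pfx. (\<forall>z\<in>set_tree S. z < w) \<or> (\<forall>z\<in>set_tree S. w < z)"
    "\<forall>y\<in>set_tree c - set_tree S. \<exists>w\<in>set pfx. \<exists>z\<in>set_tree S. z < w \<and> w \<le> y \<or> y \<le> w \<and> w < z"
    using assms(1) unfolding ancestor_path_def by blast+
  have S_c: "set_tree S \<subseteq> set_tree c" using set_tree_subtrees[OF assms(3)] .
  obtain z where z: "z \<in> set_tree S" using assms(4) by (cases S) auto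
  show ?thesis
    unfolding ancestor_path_def
  proof (intro conjI ballI)
    fix y assume "y \<in> set_tree S"
    then show "search_path (Node l a r) y = (a # pfx) @ search_path S y"
      using assms(2,5) S_c pfx(1) by fastforce
  next
    fix w assume "w \<in> set (a # pfx)"
    then show "(\<forall>z\<in>set_tree S. z < w) \<or> (\<forall>z\<in>set_tree S. w < z)"
      using assms(2,5) S_c pfx(2) by auto
  next
    fix y assume y: "y \<in> set_tree (Node l a r) - set_tree S"
    show "\<exists>w\<in>set (a # pfx). \<exists>z\<in>set_tree S. z < w \<and> w \<le> y \<or> y \<le> w \<and> w < z"
    proof (cases "y \<in> set_tree c")
      case True
      then show ?thesis using pfx(3) y by auto
    next
      case False
      then have "z < a \<and> a \<le> y \<or> y \<le> a \<and> a < z"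
        using y z assms(2,5) S_c by fastforce
      then show ?thesis using z by auto
    qed
  qed
qed

lemma ex_ancestor_path:
  assumes "bst T" and "S \<in> subtrees T" and "S \<noteq> Leaf"
  shows "\<exists>pfx. ancestor_path T S pfx"
  using assms
proof (induction T)
  case Leaf
  then show ?case by simp
next
  case (Node l a r)
  show ?case
  proof (cases "S = Node l a r")
    case True
    then show ?thesis unfolding ancestor_path_def by (intro exI[of _ "[]"]) simp
  next
    case False
    then obtain c where c: "c \<in> {l, r}" "S \<in> subtrees c"
      using Node.prems(2) by auto
    then obtain pfx where "ancestor_path c S pfx"
      using Node.IH Node.prems(1,3) by auto
    then show ?thesis
      using ancestor_path_Cons c Node.prems(1,3) by blast
  qed
qed

lemma build_Nil: "build n [] [t] = t"
  by (cases n) auto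

lemma build_Suc_at_strict_min:
  assumes "i < length vps" and "\<forall>j<length vps. j \<noteq> i \<longrightarrow> snd (vps ! i) < snd (vps ! j)"
  shows "build (Suc n) vps ss =
    Node (build n (take i vps) (take (Suc i) ss)) (fst (vps ! i))
         (build n (drop (Suc i) vps) (drop (Suc i) ss))"
proof -
  have "(LEAST i. i < length vps \<and> (\<forall>j<length vps. snd (vps ! i) \<le> snd (vps ! j))) = i"
  proof (rule Least_equality)
    show "i < length vps \<and> (\<forall>j<length vps. snd (vps ! i) \<le> snd (vps ! j))"
      using assms by (metis order.order_iff_strict)
  next
    fix i' assume "i' < length vps \<and> (\<forall>j<length vps. snd (vps ! i') \<le> snd (vps ! j))"
    then show "i \<le> i'"
      using assms by (metis leD order.refl)
  qed
  then show ?thesis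
    using assms(1) by (auto simp: Let_def)
qed

lemma build_path_split:
  assumes "sorted_wrt (\<lambda>u v. P u < P v) (search_path T x)" and "length (search_path T x) \<le> n"
  shows "build n (map (\<lambda>v. (v, P v)) (fst (path_split T x))) (snd (path_split T x)) = T"
  using assms
proof (induction T arbitrary: n)
  case Leaf
  then show ?case by (cases n) auto
next
  case (Node l a r)
  then obtain m where n: "n = Suc m" by (cases n) (auto split: if_splits)
  consider "x = a" | "x < a" | "a < x" by linarith
  then show ?case
  proof cases
    case 1
    then show ?thesis
      using build_Suc_at_strict_min[of 0 "[(a, P a)]"] by (simp add: n build_Nil nth_append del: build.simps(2))
  next
    case 2
    obtain ks ss where ps: "path_split l x = (ks, ss)" by fastforce
    have ks: "set ks = set (search_path l x)" "length ss = Suc (length ks)"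
      using set_path_split[of l x] length_path_split_subtrees[of l x] ps by auto
    have below: "\<forall>v\<in>set ks. P a < P v"
      using Node.prems(1) 2 ks(1) by simp
    let ?vps = "map (\<lambda>v. (v, P v)) ks @ [(a, P a)]"
    have "build m (map (\<lambda>v. (v, P v)) ks) ss = l"
      using Node.IH(1)[of m] Node.prems 2 ps n by simp
    moreover have "build (Suc m) ?vps (ss @ [r]) =
      Node (build m (take (length ks) ?vps) (take (Suc (length ks)) (ss @ [r]))) (fst (?vps ! length ks))
           (build m (drop (Suc (length ks)) ?vps) (drop (Suc (length ks)) (ss @ [r])))"
      by (rule build_Suc_at_strict_min) (use below in \<open>auto simp: nth_append\<close>)
    ultimately show ?thesis
      using 2 ps ks(2) by (simp add: n build_Nil nth_append del: build.simps(2))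
  next
    case 3
    obtain ks ss where ps: "path_split r x = (ks, ss)" by fastforce
    have ks: "set ks = set (search_path r x)"
      using set_path_split[of r x] ps by auto
    have below: "\<forall>v\<in>set ks. P a < P v"
      using Node.prems(1) 3 ks by simp
    let ?vps = "(a, P a) # map (\<lambda>v. (v, P v)) ks"
    have "build m (map (\<lambda>v. (v, P v)) ks) ss = r"
      using Node.IH(2)[of m] Node.prems 3 ps n by simp
    moreover have "build (Suc m) ?vps (l # ss) =
      Node (build m (take 0 ?vps) (take (Suc 0) (l # ss))) (fst (?vps ! 0))
           (build m (drop (Suc 0) ?vps) (drop (Suc 0) (l # ss)))"
      by (rule build_Suc_at_strict_min) (use below in \<open>auto simp: nth_Cons split: nat.splits\<close>)
    ultimately show ?thesis
      using 3 ps by (simp add: n build_Nil nth_append del: build.simps(2))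
  qed
qed

section \<open>Windows and first visits\<close>

text \<open>The interval (v(i-1), v(i+1)) of the paper, described by the neighbours of v in K rather than by indices.\<close>

definition window :: "nat set \<Rightarrow> nat \<Rightarrow> nat set" where
  "window K v = {y. \<forall>w\<in>K. (w < v \<longrightarrow> w < y) \<and> (v < w \<longrightarrow> y < w)}"

lemma in_window_iff:
  assumes "sorted_wrt (<) vs" and "i < length vs"
  shows "in_window vs i y \<longleftrightarrow> y \<in> window (set vs) (vs ! i)"
proof
  assume y: "in_window vs i y"
  have sorted: "sorted vs" using assms(1) strict_sorted_iff by blast
  have "w < y" if "w \<in> set vs" "w < vs ! i" for w
  proof -
    obtain j where j: "j < length vs" "w = vs ! j" using \<open>w \<in> set vs\<close> by (metis in_set_conv_nth)
    have "j < i"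
      using assms j that(2) sorted_wrt_nth_less[OF assms(1), of i j] by (metis less_asym linorder_neqE_nat)
    then have "vs ! j \<le> vs ! (i - 1)"
      using assms(2) by (intro sorted_nth_mono[OF sorted]) auto
    then show ?thesis using y \<open>j < i\<close> j unfolding in_window_def by auto
  qed
  moreover have "y < w" if "w \<in> set vs" "vs ! i < w" for w
  proof -
    obtain j where j: "j < length vs" "w = vs ! j" using \<open>w \<in> set vs\<close> by (metis in_set_conv_nth)
    have "i < j"
      using assms j that(2) sorted_wrt_nth_less[OF assms(1), of j i] by (metis less_asym linorder_neqE_nat)
    then have "vs ! Suc i \<le> vs ! j"
      using j by (intro sorted_nth_mono[OF sorted]) auto
    then show ?thesis using y \<open>i < j\<close> j unfolding in_window_def by auto
  qed
  ultimately show "y \<in> window (set vs) (vs ! i)" unfolding window_def by blast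
next
  assume y: "y \<in> window (set vs) (vs ! i)"
  have "vs ! (i - 1) < y" if "0 < i"
    using y that assms sorted_wrt_nth_less[OF assms(1), of "i - 1" i] unfolding window_def by auto
  moreover have "y < vs ! Suc i" if "Suc i < length vs"
    using y that sorted_wrt_nth_less[OF assms(1), of i "Suc i"] unfolding window_def by auto
  ultimately show "in_window vs i y"
    unfolding in_window_def by (meson gr0I not_le)
qed

definition first_visit :: "nat list \<Rightarrow> nat set \<Rightarrow> enat" where
  "first_visit fut A =
     (if \<exists>s<length fut. fut ! s \<in> A then enat (LEAST s. s < length fut \<and> fut ! s \<in> A) else \<infinity>)"

lemma tau_eq_first_visit:
  "sorted_wrt (<) vs \<Longrightarrow> i < length vs \<Longrightarrow> tau fut vs i = first_visit fut (window (set vs) (vs ! i))"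
  by (simp add: tau_def first_visit_def in_window_iff)

lemma first_visit_mono:
  assumes "\<And>s. s < length fut \<Longrightarrow> fut ! s \<in> B \<Longrightarrow> \<exists>s'<s. fut ! s' \<in> A"
  shows "first_visit fut A \<le> first_visit fut B"
proof (cases "\<exists>s<length fut. fut ! s \<in> B")
  case True
  define s where "s = (LEAST s. s < length fut \<and> fut ! s \<in> B)"
  have s: "s < length fut" "fut ! s \<in> B"
    using LeastI_ex[OF True] unfolding s_def by auto
  obtain s' where s': "s' < s" "fut ! s' \<in> A" using assms[OF s] by blast
  have "\<exists>s<length fut. fut ! s \<in> A" using s s' by (meson less_trans)
  moreover have "(LEAST s. s < length fut \<and> fut ! s \<in> A) \<le> s'"
    by (rule Least_le) (use s s' in auto)
  ultimately show ?thesis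
    using True s s' unfolding first_visit_def s_def[symmetric] by auto
qed (auto simp: first_visit_def)

section \<open>Greedy Future is static on strongly stable sequences\<close>

lemma sibling_in_window:
  assumes "bst T" and "Node l a r \<in> subtrees T" and "(c, c') \<in> {(l, r), (r, l)}"
    and "x \<in> set_tree c" and "y \<in> set_tree c'"
  shows "y \<in> window (set (search_path T x)) a"
proof -
  obtain pfx where pfx: "\<forall>y\<in>set_tree (Node l a r). search_path T y = pfx @ search_path (Node l a r) y"
    "\<forall>w\<in>set pfx. (\<forall>z\<in>set_tree (Node l a r). z < w) \<or> (\<forall>z\<in>set_tree (Node l a r). w < z)"
    using ex_ancestor_path[OF assms(1,2)] unfolding ancestor_path_def by blast
  have bst: "bst (Node l a r)" using bst_subtrees[OF assms(1,2)] .
  have "search_path T x = pfx @ a # search_path c x"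
    using pfx(1) assms(3,4) bst by auto
  then have K: "set (search_path T x) \<subseteq> set pfx \<union> {a} \<union> set_tree c"
    using set_search_path_subset[of c x] by auto
  have y: "y \<in> set_tree (Node l a r)" using assms(3,5) by auto
  show ?thesis
    unfolding window_def
  proof (intro CollectI ballI)
    fix w assume "w \<in> set (search_path T x)"
    then consider "w \<in> set pfx" | "w = a" | "w \<in> set_tree c" using K by blast
    then show "(w < a \<longrightarrow> w < y) \<and> (a < w \<longrightarrow> y < w)"
    proof cases
      case 1
      then show ?thesis using pfx(2) y by fastforce
    next
      case 3
      then have "w < a \<and> a < y \<or> y < a \<and> a < w" using assms(3,5) bst by auto
      then show ?thesis by auto
    qed simp
  qed
qed

lemma window_in_child:
  assumes "bst T" and "Node l a r \<in> subtrees T" and "c \<in> {l, r}" and "x \<in> set_tree c"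
    and "v \<in> set (search_path c x)" and "y \<in> set_tree T" and "y \<in> window (set (search_path T x)) v"
  shows "y \<in> set_tree c"
proof -
  obtain pfx where pfx: "\<forall>y\<in>set_tree (Node l a r). search_path T y = pfx @ search_path (Node l a r) y"
    "\<forall>w\<in>set pfx. (\<forall>z\<in>set_tree (Node l a r). z < w) \<or> (\<forall>z\<in>set_tree (Node l a r). w < z)"
    "\<forall>y\<in>set_tree T - set_tree (Node l a r). \<exists>w\<in>set pfx. \<exists>z\<in>set_tree (Node l a r).
       z < w \<and> w \<le> y \<or> y \<le> w \<and> w < z"
    using ex_ancestor_path[OF assms(1,2)] unfolding ancestor_path_def by blast
  have bst: "bst (Node l a r)" using bst_subtrees[OF assms(1,2)] .
  have "search_path T x = pfx @ a # search_path c x"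
    using pfx(1) assms(3,4) bst by auto
  then have K: "set pfx \<subseteq> set (search_path T x)" "a \<in> set (search_path T x)"
    by auto
  have v: "v \<in> set_tree c" using assms(5) set_search_path_subset by blast
  then have v_S: "v \<in> set_tree (Node l a r)" using assms(3) by auto
  have y_S: "y \<in> set_tree (Node l a r)"
  proof (rule ccontr)
    assume "y \<notin> set_tree (Node l a r)"
    then obtain w z where w: "w \<in> set pfx" "z \<in> set_tree (Node l a r)"
      and sep: "z < w \<and> w \<le> y \<or> y \<le> w \<and> w < z"
      using pfx(3) assms(6) by blast
    have "(w < v \<longrightarrow> w < y) \<and> (v < w \<longrightarrow> y < w)"
      using assms(7) K(1) w(1) unfolding window_def by blast
    then show False
      using pfx(2) w sep v_S by fastforce
  qed
  have "(a < v \<longrightarrow> a < y) \<and> (v < a \<longrightarrow> y < a)"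
    using assms(7) K(2) unfolding window_def by blast
  then show ?thesis
    using y_S v assms(3) bst by auto
qed

lemma depth_of_child_less:
  assumes "bst T" and "Node l a r \<in> subtrees T" and "c \<in> {l, r}" and "v \<in> set_tree c"
  shows "depth_of T a < depth_of T v"
proof -
  obtain pfx where pfx: "\<forall>y\<in>set_tree (Node l a r). search_path T y = pfx @ search_path (Node l a r) y"
    using ex_ancestor_path[OF assms(1,2)] unfolding ancestor_path_def by blast
  have bst: "bst (Node l a r)" using bst_subtrees[OF assms(1,2)] .
  have "search_path T a = pfx @ [a]" "search_path T v = pfx @ a # search_path c v"
    using pfx assms(3,4) bst by auto
  moreover have "search_path c v \<noteq> []" using search_path_neq_Nil[OF assms(4)] .
  ultimately show ?thesis by (simp add: depth_of_def)
qed

lemma alternates_swap: "alternates l r xs \<longleftrightarrow> alternates r l xs"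
  unfolding alternates_def by blast

lemma alternates_next_in_other:
  assumes "alternates l r (filter Q (us @ x # ws))" and "\<forall>z\<in>set_tree l \<union> set_tree r. Q z"
    and "set_tree l \<inter> set_tree r = {}" and "x \<in> set_tree l"
    and "s < length ws" and "ws ! s \<in> set_tree l"
  shows "\<exists>s'<s. ws ! s' \<in> set_tree r"
proof -
  have Q_s: "Q (ws ! s)" using assms(2,6) by blast
  then have "filter Q ws \<noteq> []"
    using assms(5) by (auto simp: filter_empty_conv)
  then obtain z zs where filter_ws: "filter Q ws = z # zs" by (cases "filter Q ws") auto
  then obtain ps qs where ws: "ws = ps @ z # qs" and skipped: "\<forall>u\<in>set ps. \<not> Q u"
    using filter_eq_ConsD[OF filter_ws] by blast
  define F where "F = filter Q (us @ x # ws)"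
  have F: "F = filter Q us @ x # z # zs"
    using filter_ws assms(2,4) unfolding F_def by simp
  define i where "i = length (filter Q us)"
  have at_i: "F ! i = x" "F ! Suc i = z" and "Suc i < length F"
    unfolding F i_def by (simp_all add: nth_append)
  moreover have "alternates l r F" using assms(1) unfolding F_def .
  ultimately have "F ! i \<in> set_tree l \<and> F ! Suc i \<in> set_tree r \<or> F ! i \<in> set_tree r \<and> F ! Suc i \<in> set_tree l"
    unfolding alternates_def by blast
  then have "x \<in> set_tree l \<and> z \<in> set_tree r \<or> x \<in> set_tree r \<and> z \<in> set_tree l"
    unfolding at_i .
  then have z: "z \<in> set_tree r" using assms(3,4) by blast
  have z_at: "ws ! length ps = z" unfolding ws by simp
  have "\<not> s < length ps"
  proof
    assume "s < length ps"
    then have "ws ! s \<in> set ps" unfolding ws by (simp add: nth_append)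
    then show False using skipped Q_s by blast
  qed
  moreover have "length ps \<noteq> s" using z_at z assms(3,6) by auto
  ultimately show ?thesis
    using z_at z by (intro exI[of _ "length ps"]) auto
qed

lemma strongly_stable_next_in_sibling:
  assumes "bst T" and "strongly_stable T (us @ x # fut)" and "Node l a r \<in> subtrees T"
    and "(c, c') \<in> {(l, r), (r, l)}" and "x \<in> set_tree c"
    and "s < length fut" and "fut ! s \<in> set_tree c"
  shows "\<exists>s'<s. fut ! s' \<in> set_tree c'"
proof -
  have bst: "bst (Node l a r)" using bst_subtrees[OF assms(1,3)] .
  then have disjoint: "set_tree c \<inter> set_tree c' = {}"
    using assms(4) by fastforce
  have "l \<noteq> Leaf \<or> r \<noteq> Leaf" using assms(4,5) by auto
  then have "alternates l r (filter (\<lambda>z. z \<in> set_tree (Node l a r)) (us @ x # fut))"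
    using assms(2,3) unfolding strongly_stable_def by blast
  then have "alternates c c' (filter (\<lambda>z. z \<in> set_tree (Node l a r)) (us @ x # fut))"
    using assms(4) alternates_swap by auto
  then show ?thesis
    by (rule alternates_next_in_other) (use assms(4-7) disjoint in auto)
qed

lemma ancestor_priority_less:
  assumes "bst T" and "strongly_stable T (us @ x # fut)" and "Node l a r \<in> subtrees T"
    and "c \<in> {l, r}" and "x \<in> set_tree c" and "v \<in> set (search_path c x)"
  defines "K \<equiv> set (search_path T x)"
  shows "(first_visit fut (window K a), depth_of T a) < (first_visit fut (window K v), depth_of T v)"
proof -
  obtain c' where c': "(c, c') \<in> {(l, r), (r, l)}" using assms(4) by auto
  have fut: "set fut \<subseteq> set_tree T"
    using assms(2) leaf_keys_subset unfolding strongly_stable_def by auto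
  have "first_visit fut (window K a) \<le> first_visit fut (window K v)"
  proof (rule first_visit_mono)
    fix s assume s: "s < length fut" "fut ! s \<in> window K v"
    have "fut ! s \<in> set_tree T" using fut s(1) by (meson nth_mem subsetD)
    then have "fut ! s \<in> set_tree c"
      using window_in_child[OF assms(1,3,4,5,6)] s(2) unfolding K_def by blast
    then obtain s' where "s' < s" "fut ! s' \<in> set_tree c'"
      using strongly_stable_next_in_sibling[OF assms(1,2,3) c' assms(5) s(1)] by blast
    then show "\<exists>s'<s. fut ! s' \<in> window K a"
      using sibling_in_window[OF assms(1,3) c' assms(5)] unfolding K_def by blast
  qed
  moreover have "depth_of T a < depth_of T v"
    using depth_of_child_less[OF assms(1,3,4)] assms(6) set_search_path_subset by blast
  ultimately show ?thesis by (simp add: less_prod_def)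
qed

lemma search_path_priority_sorted:
  assumes "bst T" and "strongly_stable T (us @ x # fut)"
  defines "K \<equiv> set (search_path T x)"
  defines "P \<equiv> \<lambda>v. (first_visit fut (window K v), depth_of T v)"
  shows "sorted_wrt (\<lambda>u v. P u < P v) (search_path T x)"
proof -
  have "sorted_wrt (\<lambda>u v. P u < P v) (search_path S x)"
    if "S \<in> subtrees T" and "x \<in> set_tree S" for S
    using that
  proof (induction S)
    case Leaf
    then show ?case by simp
  next
    case (Node l a r)
    have bst: "bst (Node l a r)" using bst_subtrees[OF assms(1) Node.prems(1)] .
    have subtrees: "l \<in> subtrees T" "r \<in> subtrees T"
      using subtrees_trans[OF Node.prems(1)] by auto
    consider "x = a" | "x < a" | "a < x" by linarith
    then show ?case
    proof cases
      case 2
      then have "x \<in> set_tree l" using Node.prems(2) bst by auto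
      then show ?thesis
        using 2 Node.IH(1)[OF subtrees(1)] ancestor_priority_less[OF assms(1,2) Node.prems(1), of l]
        unfolding P_def K_def by auto
    next
      case 3
      then have "x \<in> set_tree r" using Node.prems(2) bst by auto
      then show ?thesis
        using 3 Node.IH(2)[OF subtrees(2)] ancestor_priority_less[OF assms(1,2) Node.prems(1), of r]
        unfolding P_def K_def by auto
    qed simp
  qed
  moreover have "x \<in> set_tree T"
    using assms(2) leaf_keys_subset unfolding strongly_stable_def by auto
  ultimately show ?thesis by simp
qed

lemma gf_step_strongly_stable:
  assumes "bst T" and "strongly_stable T (us @ x # fut)"
  shows "gf_step T x fut = T"
proof -
  obtain vs ss where split: "path_split T x = (vs, ss)" by fastforce
  define K where "K = set (search_path T x)"
  define P where "P = (\<lambda>v. (first_visit fut (window K v), depth_of T v))"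
  have sorted: "sorted_wrt (<) vs" using sorted_path_split[OF assms(1), of x] split by simp
  have K: "set vs = K" using set_path_split[of T x] split unfolding K_def by simp
  have "map (\<lambda>i. (vs ! i, (tau fut vs i, depth_of T (vs ! i)))) [0..<length vs] = map (\<lambda>v. (v, P v)) vs"
    by (rule nth_equalityI) (simp_all add: P_def K[symmetric] tau_eq_first_visit[OF sorted])
  then have "gf_step T x fut = build (length vs) (map (\<lambda>v. (v, P v)) vs) ss"
    unfolding gf_step_def split by simp
  also have "\<dots> = T"
    using build_path_split[OF search_path_priority_sorted[OF assms]] length_path_split[of T x] split
    unfolding P_def K_def by simp
  finally show ?thesis .
qed

definition static_cost :: "nat tree \<Rightarrow> nat list \<Rightarrow> nat" where
  "static_cost T X = (\<Sum>x\<leftarrow>X. length (search_path T x))"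

lemma gf_total_strongly_stable:
  assumes "bst T" and "strongly_stable T (us @ X)"
  shows "gf_total T X = static_cost T X"
  using assms(2)
proof (induction X arbitrary: us)
  case Nil
  then show ?case by (simp add: static_cost_def)
next
  case (Cons x X)
  have "gf_step T x X = T" using gf_step_strongly_stable[OF assms(1) Cons.prems] .
  moreover have "card (set (search_path T x)) = length (search_path T x)"
    using distinct_card[OF search_path_distinct[OF assms(1)]] .
  moreover have "gf_total T X = static_cost T X" using Cons.IH[of "us @ [x]"] Cons.prems by simp
  ultimately show ?case by (simp add: static_cost_def)
qed

section \<open>Balanced query sequences\<close>

fun balanced :: "nat tree \<Rightarrow> nat list \<Rightarrow> bool" where
  "balanced Leaf X \<longleftrightarrow> X = []"
| "balanced (Node l a r) X \<longleftrightarrow> set X \<subseteq> set_tree (Node l a r) \<and>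
     (l = Leaf \<and> r = Leaf \<or>
      a \<notin> set X \<and> length [x\<leftarrow>X. x \<in> set_tree l] = length [x\<leftarrow>X. x \<in> set_tree r]) \<and>
     balanced l [x\<leftarrow>X. x \<in> set_tree l] \<and> balanced r [x\<leftarrow>X. x \<in> set_tree r]"

lemma alternates_Cons: "alternates l r (z # Z) \<Longrightarrow> alternates l r Z"
  unfolding alternates_def by fastforce

lemma alternates_Cons_Cons:
  "alternates l r (z # z' # Z) \<Longrightarrow> z \<in> set_tree l \<and> z' \<in> set_tree r \<or> z \<in> set_tree r \<and> z' \<in> set_tree l"
  unfolding alternates_def by fastforce

lemma alternates_subset:
  assumes "alternates l r Z" and "2 \<le> length Z"
  shows "set Z \<subseteq> set_tree l \<union> set_tree r"
proof
  fix z assume "z \<in> set Z"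
  then obtain i where i: "i < length Z" "Z ! i = z" by (metis in_set_conv_nth)
  show "z \<in> set_tree l \<union> set_tree r"
  proof (cases "Suc i < length Z")
    case True
    then show ?thesis using assms(1) i unfolding alternates_def by blast
  next
    case False
    then have "Suc (i - 1) < length Z" "Suc (i - 1) = i" using assms(2) i by auto
    then show ?thesis using assms(1) i unfolding alternates_def by (metis Un_iff)
  qed
qed

lemma alternates_count_diff:
  assumes "alternates l r Z" and "set Z \<subseteq> set_tree l \<union> set_tree r"
    and "set_tree l \<inter> set_tree r = {}" and "Z \<noteq> []"
  shows "int (length [x\<leftarrow>Z. x \<in> set_tree l]) - int (length [x\<leftarrow>Z. x \<in> set_tree r])
    \<in> {0, if hd Z \<in> set_tree l then 1 else -1}"
  using assms
proof (induction Z)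
  case (Cons z Z)
  show ?case
  proof (cases "Z = []")
    case True
    then show ?thesis using Cons.prems(2,3) by auto
  next
    case False
    then obtain z' Z' where Z: "Z = z' # Z'" by (cases Z) auto
    have "z \<in> set_tree l \<and> z' \<in> set_tree r \<or> z \<in> set_tree r \<and> z' \<in> set_tree l"
      using alternates_Cons_Cons Cons.prems(1) Z by blast
    moreover have "int (length [x\<leftarrow>Z. x \<in> set_tree l]) - int (length [x\<leftarrow>Z. x \<in> set_tree r])
        \<in> {0, if z' \<in> set_tree l then 1 else -1}"
      using Cons.IH alternates_Cons Cons.prems Z by fastforce
    moreover have "z' \<notin> set_tree l" if "z' \<in> set_tree r" using that Cons.prems(3) by blast
    ultimately show ?thesis using Cons.prems(3) by auto
  qed
qed simp

lemma alternates_append_self: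
  assumes "alternates l r (Y @ Y)" and "set_tree l \<inter> set_tree r = {}"
  shows "set Y \<subseteq> set_tree l \<union> set_tree r"
    and "length [x\<leftarrow>Y. x \<in> set_tree l] = length [x\<leftarrow>Y. x \<in> set_tree r]"
proof -
  show sub: "set Y \<subseteq> set_tree l \<union> set_tree r"
    using alternates_subset[OF assms(1)] by (cases Y) auto
  show "length [x\<leftarrow>Y. x \<in> set_tree l] = length [x\<leftarrow>Y. x \<in> set_tree r]"
  proof (cases "Y = []")
    case False
    then have "int (length [x\<leftarrow>Y @ Y. x \<in> set_tree l]) - int (length [x\<leftarrow>Y @ Y. x \<in> set_tree r])
      \<in> {0, 1, -1}"
      using alternates_count_diff[OF assms(1) _ assms(2)] sub by (auto split: if_splits)
    then show ?thesis by simp presburger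
  qed simp
qed

lemma filter_subtree_filter:
  "s \<in> subtrees t \<Longrightarrow> [x\<leftarrow>[x\<leftarrow>X. x \<in> set_tree t]. x \<in> set_tree s] = [x\<leftarrow>X. x \<in> set_tree s]"
  using set_tree_subtrees by (force intro: filter_cong)

lemma balanced_if_strongly_stable_twice:
  assumes "bst T" and "strongly_stable T (X @ X)"
  shows "balanced T X"
proof -
  have "balanced S [x\<leftarrow>X. x \<in> set_tree S]" if "S \<in> subtrees T" for S
    using that
  proof (induction S)
    case Leaf
    then show ?case by simp
  next
    case (Node l a r)
    define Y where "Y = [x\<leftarrow>X. x \<in> set_tree (Node l a r)]"
    have bst: "bst (Node l a r)" using bst_subtrees[OF assms(1) Node.prems] .
    have children: "[x\<leftarrow>Y. x \<in> set_tree l] = [x\<leftarrow>X. x \<in> set_tree l]"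
      "[x\<leftarrow>Y. x \<in> set_tree r] = [x\<leftarrow>X. x \<in> set_tree r]"
      unfolding Y_def by (rule filter_subtree_filter; simp)+
    have "a \<notin> set Y \<and> length [x\<leftarrow>Y. x \<in> set_tree l] = length [x\<leftarrow>Y. x \<in> set_tree r]"
      if "l \<noteq> Leaf \<or> r \<noteq> Leaf"
    proof -
      have "alternates l r (Y @ Y)"
        using assms(2) Node.prems that unfolding strongly_stable_def Y_def by auto
      moreover have "set_tree l \<inter> set_tree r = {}" using bst by fastforce
      ultimately show ?thesis using alternates_append_self bst by fastforce
    qed
    moreover have "balanced l [x\<leftarrow>X. x \<in> set_tree l]" "balanced r [x\<leftarrow>X. x \<in> set_tree r]"
      using Node.IH subtrees_trans[OF Node.prems] by auto
    moreover have "set Y \<subseteq> set_tree (Node l a r)" unfolding Y_def by auto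
    ultimately show ?case
      using children unfolding Y_def[symmetric] by (simp only: balanced.simps) blast
  qed
  moreover have "[x\<leftarrow>X. x \<in> set_tree T] = X"
    using assms(2) leaf_keys_subset unfolding strongly_stable_def by (auto simp: filter_id_conv)
  ultimately show ?thesis by (metis self_in_subtrees)
qed

lemma static_cost_Node:
  assumes "bst (Node l a r)" and "set X \<subseteq> set_tree (Node l a r)" and "a \<notin> set X"
  shows "static_cost (Node l a r) X =
    length X + static_cost l [x\<leftarrow>X. x \<in> set_tree l] + static_cost r [x\<leftarrow>X. x \<in> set_tree r]"
  using assms(2,3)
proof (induction X)
  case Nil
  then show ?case by (simp add: static_cost_def)
next
  case (Cons x X)
  then consider "x \<in> set_tree l" "x \<notin> set_tree r" "x < a"
    | "x \<in> set_tree r" "x \<notin> set_tree l" "a < x"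
    using assms(1) by fastforce
  then show ?case
    using Cons by cases (auto simp: static_cost_def)
qed

lemma length_filter_children:
  assumes "bst (Node l a r)" and "set X \<subseteq> set_tree (Node l a r)" and "a \<notin> set X"
  shows "length X = length [x\<leftarrow>X. x \<in> set_tree l] + length [x\<leftarrow>X. x \<in> set_tree r]"
  using assms(2,3)
proof (induction X)
  case (Cons x X)
  then consider "x \<in> set_tree l" "x \<notin> set_tree r" | "x \<in> set_tree r" "x \<notin> set_tree l"
    using assms(1) by fastforce
  then show ?case using Cons by cases auto
qed simp

text \<open>
  Expected number of nodes on a root-to-leaf walk that picks each child with probability 1/2. The
  value at a node with exactly one empty child is meaningless; balanced sequences never reach one.
\<close>

fun random_descent_length :: "'a tree \<Rightarrow> real" where
  "random_descent_length Leaf = 0"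
| "random_descent_length (Node l a r) =
     (if l = Leaf \<and> r = Leaf then 1 else 1 + (random_descent_length l + random_descent_length r) / 2)"

lemma static_cost_balanced:
  "bst T \<Longrightarrow> balanced T X \<Longrightarrow> real (static_cost T X) = real (length X) * random_descent_length T"
proof (induction T arbitrary: X)
  case Leaf
  then show ?case by (simp add: static_cost_def)
next
  case (Node l a r)
  show ?case
  proof (cases "l = Leaf \<and> r = Leaf")
    case True
    then have "set X \<subseteq> {a}" using Node.prems(2) by simp
    then have "static_cost (Node l a r) X = length X"
      unfolding static_cost_def by (induction X) auto
    then show ?thesis using True by simp
  next
    case False
    let ?L = "[x\<leftarrow>X. x \<in> set_tree l]" and ?R = "[x\<leftarrow>X. x \<in> set_tree r]"
    have X: "set X \<subseteq> set_tree (Node l a r)" "a \<notin> set X" "length ?L = length ?R"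
      using Node.prems(2) False by auto
    have "real (static_cost l ?L) = real (length ?L) * random_descent_length l"
      "real (static_cost r ?R) = real (length ?R) * random_descent_length r"
      using Node.IH Node.prems by auto
    then show ?thesis
      using static_cost_Node[OF Node.prems(1) X(1,2)] length_filter_children[OF Node.prems(1) X(1,2)]
        X(3) False
      by (simp add: field_simps)
  qed
qed

lemma whole_multiple_of_atomic_twice:
  assumes "whole_multiple_of_atomic T X"
  shows "X \<noteq> []" and "strongly_stable T (X @ X)"
proof -
  obtain A n where "rep_stable T A" "n \<ge> 1" and X: "X = concat (replicate n A)"
    using assms unfolding whole_multiple_of_atomic_def atomic_seq_def by blast
  then have "A \<noteq> []" and "strongly_stable T (concat (replicate (n + n) A))"
    unfolding rep_stable_def by auto
  then show "X \<noteq> []" and "strongly_stable T (X @ X)"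
    using \<open>n \<ge> 1\<close> X by (auto simp: replicate_add)
qed

lemma cost_hat_GF_strongly_stable:
  assumes "bst T" and "strongly_stable T X" and "X \<noteq> []" and "strongly_stable T (X @ X)"
  shows "cost_hat_GF X T = random_descent_length T"
proof -
  have "cost_hat_GF X T = real (static_cost T X) / real (length X)"
    using gf_total_strongly_stable[OF assms(1), of "[]" X] assms(2) unfolding cost_hat_GF_def by simp
  then show ?thesis
    using static_cost_balanced[OF assms(1) balanced_if_strongly_stable_twice[OF assms(1,4)]] assms(3)
    by simp
qed

section \<open>The (k,r)-trees\<close>

lemma inorder_label: "inorder (fst (label S n)) = [n..<snd (label S n)] \<and> n \<le> snd (label S n)"
proof (induction S arbitrary: n)
  case Leaf
  then show ?case by simp
next
  case (Node l u r)
  obtain l' n1 where L: "label l n = (l', n1)" by fastforce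
  obtain r' n2 where R: "label r (Suc n1) = (r', n2)" by fastforce
  have "inorder l' = [n..<n1]" "n \<le> n1" using Node.IH(1)[of n] L by auto
  moreover have "inorder r' = [Suc n1..<n2]" "Suc n1 \<le> n2" using Node.IH(2)[of "Suc n1"] R by auto
  moreover have "[n..<n1] @ n1 # [Suc n1..<n2] = [n..<n2]"
    using calculation upt_add_eq_append[of n n1 "n2 - n1"] upt_conv_Cons[of n1 n2] by simp
  ultimately show ?case
    using L R by simp
qed

lemma bst_label: "bst (fst (label S n))"
  using inorder_label[of S n] by (simp add: bst_iff_sorted_wrt_less)

lemma label_Node:
  "fst (label (Node l u r) n) = Node (fst (label l n)) (snd (label l n)) (fst (label r (Suc (snd (label l n)))))"
  by (simp split: prod.splits)

lemma label_eq_Leaf_iff: "fst (label S n) = Leaf \<longleftrightarrow> S = Leaf"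
  by (cases S) (simp_all split: prod.splits)

lemma random_descent_length_label: "random_descent_length (fst (label S n)) = random_descent_length S"
  by (induction S arbitrary: n) (simp_all only: label_Node label_eq_Leaf_iff random_descent_length.simps, simp)

lemma random_descent_length_chain:
  assumes "S \<noteq> Leaf"
  shows "random_descent_length (chain S m) = 2 - 1 / 2 ^ m + (1 - 1 / 2 ^ m) * random_descent_length S"
proof (induction m)
  case 0
  then show ?case by simp
next
  case (Suc m)
  have "chain S m \<noteq> Leaf" by (cases m) auto
  then show ?case using Suc by (simp add: field_simps)
qed

lemma random_descent_length_kr_shape_Suc:
  assumes "k \<ge> 1"
  shows "random_descent_length (kr_shape k (Suc r)) =
    (2 - 1 / 2 ^ k) + (1 - 1 / 2 ^ k) * random_descent_length (kr_shape k r)"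
proof -
  have "kr_shape k r \<noteq> Leaf" by (cases r) auto
  moreover obtain j where "k = Suc j" using assms by (cases k) auto
  ultimately show ?thesis by (simp add: random_descent_length_chain field_simps)
qed

lemma affine_recurrence_closed_form:
  fixes c :: "nat \<Rightarrow> real"
  assumes "c 0 = 1" and "\<And>r. c (Suc r) = \<beta> + \<alpha> * c r" and "(1 - \<alpha>) * q = 1"
  shows "c r = q * \<beta> * (1 - \<alpha> ^ r) + \<alpha> ^ r"
proof (induction r)
  case 0
  then show ?case using assms(1) by simp
next
  case (Suc r)
  have "c (Suc r) = \<beta> * ((1 - \<alpha>) * q) + \<alpha> * (q * \<beta> * (1 - \<alpha> ^ r) + \<alpha> ^ r)"
    using Suc assms(2,3) by simp
  then show ?case by (simp add: algebra_simps)
qed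

lemma sum_index_div_two_power: "(\<Sum>j = 1..k. real j / 2 ^ j) = 2 - (real k + 2) / 2 ^ k"
  by (induction k) (simp_all add: field_simps)

lemma random_descent_length_kr_shape:
  assumes "k \<ge> 1"
  shows "random_descent_length (kr_shape k r) =
    2 ^ k * (2 - 1 / 2 ^ k) * (1 - (1 - 1 / 2 ^ k) ^ r) + (1 - 1 / 2 ^ k) ^ r"
proof (rule affine_recurrence_closed_form)
  show "random_descent_length (kr_shape k 0) = 1" by simp
  show "random_descent_length (kr_shape k (Suc r)) =
    (2 - 1 / 2 ^ k) + (1 - 1 / 2 ^ k) * random_descent_length (kr_shape k r)" for r
    using random_descent_length_kr_shape_Suc[OF assms] .
  show "(1 - (1 - 1 / 2 ^ k)) * 2 ^ k = (1::real)" by simp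
qed

theorem lemma9:
  fixes k r :: nat and X :: "nat list" and \<alpha> \<beta> :: real
  assumes "k \<ge> 2"
    and "strongly_stable (kr_tree k r) X"
    and "whole_multiple_of_atomic (kr_tree k r) X"
    and "\<alpha> = 1 - 1 / 2 ^ k"
    and "\<beta> = (\<Sum>j = 1..k. real j / 2 ^ j) + real (k + 1) / 2 ^ k"
  shows "cost_hat_GF X (kr_tree k r) = 2 ^ k * \<beta> * (1 - \<alpha> ^ r) + \<alpha> ^ r"
proof -
  have "bst (kr_tree k r)" unfolding kr_tree_def by (rule bst_label)
  then have "cost_hat_GF X (kr_tree k r) = random_descent_length (kr_shape k r)"
    using cost_hat_GF_strongly_stable assms(2) whole_multiple_of_atomic_twice[OF assms(3)]
      random_descent_length_label unfolding kr_tree_def by metis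
  moreover have "\<beta> = 2 - 1 / 2 ^ k"
    using assms(5) sum_index_div_two_power[of k] by (simp add: field_simps)
  ultimately show ?thesis
    using random_descent_length_kr_shape[of k r] assms(1,4) by simp
qed

end
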